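(* With $\phi_i,\theta^*,\pi_i,\pi_i^*,\mathcal{L},u,v,\lambda_\phi$ as in the generalized linear model setting: (i) $\mathcal{L}$ is $\beta$-smooth with $\beta=\frac38\max_i\|\phi_i\|_2^2$, i.e. $|z^\top\nabla^2\mathcal{L}(\theta)z|\le\beta\|z\|_2^2$ for all $\theta,z$; (ii) for every $\theta$ with $\mathcal{L}(\theta)>0$ and every $z\in\mathbb{R}^d$, $|z^\top\nabla^2\mathcal{L}(\theta)z|\le\beta(\theta)\|z\|_2^2$, where $$\beta(\theta)=L_1(\theta)\Big\|\frac{\partial\mathcal{L}(\theta)}{\partial\theta}\Big\|_2+L_0(\theta)\,\frac{\|\partial\mathcal{L}(\theta)/\partial\theta\|_2^2}{\mathcal{L}(\theta)},$$ $$L_1(\theta)=\frac{\max_i\|\phi_i\|_2^2}{32\,(\min\{u(\theta),v\}\sqrt{\lambda_\phi})^{3/2}},\qquad L_0(\theta)=\frac{17\max_i\|\phi_i\|_2^2}{512\,u(\theta)^2\min\{u(\theta)^2,v^2\}\lambda_\phi}.$$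
   Context: Generalized linear model setting: $\phi_1,\dots,\phi_N\in\mathbb{R}^d$ (not all zero), $\theta^*\in\mathbb{R}^d$, $\sigma(z)=1/(1+e^{-z})$, $\pi_i^*=\sigma(\phi_i^\top\theta^* )$, $\pi_i=\pi_i(\theta)=\sigma(\phi_i^\top\theta)$, $\mathcal{L}(\theta)=\frac1N\sum_{i=1}^N(\pi_i-\pi_i^* )^2$, $u(\theta)=\min_i\pi_i(1-\pi_i)$, $v=\min_i\pi_i^*(1-\pi_i^* )$, $\lambda_\phi$ the smallest positive eigenvalue of $\frac1N\sum_i\phi_i\phi_i^\top$. *)

theory Defs
  imports "HOL-Analysis.Analysis"
begin

definition sigmoid :: "real \<Rightarrow> real" where
  "sigmoid z = 1 / (1 + exp (- z))"

definition partial :: "(real^'d \<Rightarrow> real) \<Rightarrow> 'd \<Rightarrow> real^'d \<Rightarrow> real" where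
  "partial f i x = deriv (\<lambda>t. f (x + t *\<^sub>R axis i 1)) 0"

definition grad :: "(real^'d \<Rightarrow> real) \<Rightarrow> real^'d \<Rightarrow> real^'d" where
  "grad f x = (\<chi> i. partial f i x)"

definition hessian :: "(real^'d \<Rightarrow> real) \<Rightarrow> real^'d \<Rightarrow> real^'d^'d" where
  "hessian f x = (\<chi> i j. partial (\<lambda>y. partial f i y) j x)"

definition glm_pi :: "(nat \<Rightarrow> real^'d) \<Rightarrow> real^'d \<Rightarrow> nat \<Rightarrow> real" where
  "glm_pi phi \<theta> i = sigmoid (phi i \<bullet> \<theta>)"

definition glm_loss :: "nat \<Rightarrow> (nat \<Rightarrow> real^'d) \<Rightarrow> real^'d \<Rightarrow> real^'d \<Rightarrow> real" where
  "glm_loss N phi \<theta>s \<theta> = (1 / real N) * (\<Sum>i<N. (glm_pi phi \<theta> i - glm_pi phi \<theta>s i)^2)"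

definition glm_u :: "nat \<Rightarrow> (nat \<Rightarrow> real^'d) \<Rightarrow> real^'d \<Rightarrow> real" where
  "glm_u N phi \<theta> = Min {glm_pi phi \<theta> i * (1 - glm_pi phi \<theta> i) | i. i < N}"

definition max_phi_sq :: "nat \<Rightarrow> (nat \<Rightarrow> real^'d) \<Rightarrow> real" where
  "max_phi_sq N phi = Max {(norm (phi i))^2 | i. i < N}"

definition outer :: "real^'d \<Rightarrow> real^'d \<Rightarrow> real^'d^'d" where
  "outer a b = (\<chi> i j. a $ i * b $ j)"

definition design_matrix :: "nat \<Rightarrow> (nat \<Rightarrow> real^'d) \<Rightarrow> real^'d^'d" where
  "design_matrix N phi = (1 / real N) *\<^sub>R (\<Sum>i<N. outer (phi i) (phi i))"

definition is_eigenvalue :: "real^'d^'d \<Rightarrow> real \<Rightarrow> bool" where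
  "is_eigenvalue A c \<longleftrightarrow> (\<exists>x. x \<noteq> 0 \<and> A *v x = c *\<^sub>R x)"

definition lambda_phi :: "nat \<Rightarrow> (nat \<Rightarrow> real^'d) \<Rightarrow> real" where
  "lambda_phi N phi = Min {c. c > 0 \<and> is_eigenvalue (design_matrix N phi) c}"

end

theory Submission
  imports Defs
begin

(* The Hessian quadratic form of L at theta is (2/N) sum_k h_k (phi_k . z)^2, where
   h_k = s (s + (sigma - pi*_k) (1 - 2 sigma)) with sigma = sigma(phi_k . theta) and s = sigma (1 - sigma);
   since 0 < s <= 1/4 and |pi*_k - sigma| < 1, we get |h_k| <= 3/16, which is (i).
   For (ii), write theta - theta* = w + w' with w in the span of the phi_k and w' orthogonal to it.
   By the mean value theorem for sigma, <grad L, w> >= 8 u L and L >= min(u,v)^2 lambda_phi |w|^2,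
   the latter because the least positive eigenvalue of the design matrix bounds its quadratic form
   from below on the span.  Cauchy-Schwarz then gives |grad L|^2 >= 64 u^2 min(u,v)^2 lambda_phi L,
   so the L0 term alone is at least (17/8) max_i |phi_i|^2 and (ii) follows from (i). *)

definition sigmoid' :: "real \<Rightarrow> real" where
  "sigmoid' a = sigmoid a * (1 - sigmoid a)"

lemma sigmoid_pos: "0 < sigmoid a" and sigmoid_less_1: "sigmoid a < 1"
  unfolding sigmoid_def by (auto simp: divide_simps add_pos_pos)

lemma sigmoid_mono: "a \<le> b \<Longrightarrow> sigmoid a \<le> sigmoid b"
  unfolding sigmoid_def by (auto simp: divide_simps add_pos_pos)

lemma sigmoid'_pos: "0 < sigmoid' a"
  unfolding sigmoid'_def using sigmoid_pos[of a] sigmoid_less_1[of a] by simp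

lemma sigmoid'_le: "sigmoid' a \<le> 1/4"
proof -
  have "0 \<le> (sigmoid a - 1/2)^2" by simp
  then show ?thesis unfolding sigmoid'_def by (simp add: power2_eq_square algebra_simps)
qed

lemma sigmoid_has_real_derivative: "(sigmoid has_real_derivative sigmoid' a) (at a)"
proof -
  have pos: "1 + exp (-a) > 0" by (simp add: add_pos_pos)
  have "((\<lambda>z. 1 / (1 + exp (- z))) has_real_derivative exp (-a) / (1 + exp (-a))^2) (at a)"
    using pos by (auto intro!: derivative_eq_intros simp: power2_eq_square)
  moreover have "exp (-a) / (1 + exp (-a))^2 = sigmoid' a"
    using pos unfolding sigmoid'_def sigmoid_def by (simp add: field_simps power2_eq_square)
  ultimately show ?thesis unfolding sigmoid_def[abs_def] by simp
qed

lemma sigmoid'_has_real_derivative: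
  "(sigmoid' has_real_derivative sigmoid' a * (1 - 2 * sigmoid a)) (at a)"
proof -
  have "((\<lambda>a. sigmoid a * (1 - sigmoid a)) has_real_derivative
     sigmoid' a * (1 - sigmoid a) + sigmoid a * (- sigmoid' a)) (at a)"
    by (rule derivative_eq_intros sigmoid_has_real_derivative refl)+ simp
  then show ?thesis unfolding sigmoid'_def[abs_def] by (simp add: algebra_simps)
qed

lemma min_endpoints_le_mult_one_minus:
  fixes q q1 q2 :: real
  assumes "q1 \<le> q" "q \<le> q2"
  shows "min (q1 * (1 - q1)) (q2 * (1 - q2)) \<le> q * (1 - q)"
proof (cases "q + q1 \<le> 1")
  case True
  have "q * (1 - q) - q1 * (1 - q1) = (q - q1) * (1 - q - q1)" by (simp add: algebra_simps)
  also have "\<dots> \<ge> 0" using True assms by simp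
  finally show ?thesis by linarith
next
  case False
  have "q * (1 - q) - q2 * (1 - q2) = (q2 - q) * (q + q2 - 1)" by (simp add: algebra_simps)
  also have "\<dots> \<ge> 0" using False assms by simp
  finally show ?thesis by linarith
qed

lemma sigmoid_mean_value:
  "\<exists>c. sigmoid b - sigmoid a = c * (b - a) \<and> min (sigmoid' a) (sigmoid' b) \<le> c \<and> c \<le> 1/4"
proof -
  have "\<exists>c. sigmoid y - sigmoid x = c * (y - x) \<and> min (sigmoid' x) (sigmoid' y) \<le> c \<and> c \<le> 1/4"
    if "x < y" for x y
  proof -
    obtain z where z: "x < z" "z < y" "sigmoid y - sigmoid x = (y - x) * sigmoid' z"
      using MVT2[OF \<open>x < y\<close>, of sigmoid sigmoid'] sigmoid_has_real_derivative by blast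
    have "min (sigmoid' x) (sigmoid' y) \<le> sigmoid' z"
      unfolding sigmoid'_def using z
      by (intro min_endpoints_le_mult_one_minus sigmoid_mono) auto
    then show ?thesis using z sigmoid'_le[of z] by (intro exI[of _ "sigmoid' z"]) (simp add: mult.commute)
  qed
  from this[of a b] this[of b a] show ?thesis
    by (cases a b rule: linorder_cases)
       (auto simp: algebra_simps min.commute intro: exI[of _ "sigmoid' a"] sigmoid'_le, metis)
qed

lemma partial_ridge_sum:
  fixes phi :: "nat \<Rightarrow> real^'d"
  assumes "\<And>k a. k < N \<Longrightarrow> (h k has_real_derivative h' k a) (at a)"
  shows "partial (\<lambda>y. \<Sum>k<N. h k (phi k \<bullet> y)) j x = (\<Sum>k<N. h' k (phi k \<bullet> x) * phi k $ j)"
proof -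
  have line: "phi k \<bullet> (x + t *\<^sub>R axis j 1) = phi k \<bullet> x + t * phi k $ j" for k t
    by (simp add: inner_add_right inner_axis)
  have "((\<lambda>t. \<Sum>k<N. h k (phi k \<bullet> x + t * phi k $ j)) has_real_derivative
        (\<Sum>k<N. h' k (phi k \<bullet> x) * phi k $ j)) (at 0)"
  proof (rule DERIV_sum)
    fix k assume "k \<in> {..<N}"
    then have "(h k has_real_derivative h' k (phi k \<bullet> x + 0 * phi k $ j)) (at (phi k \<bullet> x + 0 * phi k $ j))"
      using assms by auto
    moreover have "((\<lambda>t. phi k \<bullet> x + t * phi k $ j) has_real_derivative phi k $ j) (at 0)"
      by (auto intro!: derivative_eq_intros)
    ultimately show "((\<lambda>t. h k (phi k \<bullet> x + t * phi k $ j)) has_real_derivative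
        h' k (phi k \<bullet> x) * phi k $ j) (at 0)"
      using DERIV_chain2 by fastforce
  qed
  then show ?thesis unfolding partial_def line by (rule DERIV_imp_deriv)
qed

lemma glm_loss_nonneg: "0 \<le> glm_loss N phi \<theta>s \<theta>"
  unfolding glm_loss_def by (simp add: sum_nonneg)

lemma glm_loss_ridge_sum:
  "glm_loss N phi \<theta>s = (\<lambda>y. \<Sum>k<N. (\<lambda>a. (1/N) * (sigmoid a - glm_pi phi \<theta>s k)^2) (phi k \<bullet> y))"
  by (rule ext) (simp add: glm_loss_def glm_pi_def sum_distrib_left)

lemma partial_glm_loss:
  "partial (glm_loss N phi \<theta>s) i y =
     (\<Sum>k<N. 2 / N * (sigmoid (phi k \<bullet> y) - glm_pi phi \<theta>s k) * sigmoid' (phi k \<bullet> y) * phi k $ i)"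
proof -
  have "partial (glm_loss N phi \<theta>s) i y =
      (\<Sum>k<N. (1/N) * (2 * (sigmoid (phi k \<bullet> y) - glm_pi phi \<theta>s k) * sigmoid' (phi k \<bullet> y)) * phi k $ i)"
    unfolding glm_loss_ridge_sum
    by (rule partial_ridge_sum) (rule derivative_eq_intros sigmoid_has_real_derivative refl | simp)+
  then show ?thesis by (simp add: algebra_simps)
qed

lemma inner_grad_glm_loss:
  "grad (glm_loss N phi \<theta>s) x \<bullet> w =
     (\<Sum>k<N. 2 / N * (sigmoid (phi k \<bullet> x) - glm_pi phi \<theta>s k) * sigmoid' (phi k \<bullet> x) * (phi k \<bullet> w))"
proof -
  have "grad (glm_loss N phi \<theta>s) x \<bullet> w = (\<Sum>i\<in>UNIV. (\<Sum>k<N. 2 / N *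
      (sigmoid (phi k \<bullet> x) - glm_pi phi \<theta>s k) * sigmoid' (phi k \<bullet> x) * phi k $ i) * w $ i)"
    by (simp add: inner_vec_def grad_def partial_glm_loss)
  also have "\<dots> = (\<Sum>k<N. 2 / N * (sigmoid (phi k \<bullet> x) - glm_pi phi \<theta>s k) * sigmoid' (phi k \<bullet> x)
      * (\<Sum>i\<in>UNIV. phi k $ i * w $ i))"
    by (simp only: sum_distrib_left sum_distrib_right, subst sum.swap) (simp add: mult_ac)
  finally show ?thesis by (simp add: inner_vec_def)
qed

text \<open>Half the second derivative of \<open>(sigmoid a - c)\<^sup>2\<close> with respect to \<open>a\<close>.\<close>
definition glm_curvature :: "real \<Rightarrow> real \<Rightarrow> real" where
  "glm_curvature a c = sigmoid' a * (sigmoid' a + (sigmoid a - c) * (1 - 2 * sigmoid a))"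

lemma hessian_glm_loss:
  "hessian (glm_loss N phi \<theta>s) x $ i $ j =
     (\<Sum>k<N. 2 / N * glm_curvature (phi k \<bullet> x) (glm_pi phi \<theta>s k) * phi k $ i * phi k $ j)"
proof -
  have "(\<lambda>y. partial (glm_loss N phi \<theta>s) i y) =
      (\<lambda>y. \<Sum>k<N. (\<lambda>a. 2 / N * (sigmoid a - glm_pi phi \<theta>s k) * sigmoid' a * phi k $ i) (phi k \<bullet> y))"
    by (simp add: partial_glm_loss)
  then have "partial (\<lambda>y. partial (glm_loss N phi \<theta>s) i y) j x =
      (\<Sum>k<N. 2 / N * phi k $ i * (sigmoid' (phi k \<bullet> x) * sigmoid' (phi k \<bullet> x)
         + (sigmoid (phi k \<bullet> x) - glm_pi phi \<theta>s k) * (sigmoid' (phi k \<bullet> x) * (1 - 2 * sigmoid (phi k \<bullet> x))))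
       * phi k $ j)"
    by (simp only:, intro partial_ridge_sum)
      (rule derivative_eq_intros sigmoid_has_real_derivative sigmoid'_has_real_derivative refl
        | simp add: algebra_simps)+
  then show ?thesis unfolding hessian_def glm_curvature_def by (simp add: algebra_simps)
qed

lemma hessian_glm_loss_quadratic_form:
  "z \<bullet> (hessian (glm_loss N phi \<theta>s) x *v z) =
     (\<Sum>k<N. 2 / N * glm_curvature (phi k \<bullet> x) (glm_pi phi \<theta>s k) * (phi k \<bullet> z)^2)"
proof -
  have "z \<bullet> (hessian (glm_loss N phi \<theta>s) x *v z) = (\<Sum>i\<in>UNIV. z $ i * (\<Sum>j\<in>UNIV.
      (\<Sum>k<N. 2 / N * glm_curvature (phi k \<bullet> x) (glm_pi phi \<theta>s k) * phi k $ i * phi k $ j) * z $ j))"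
    by (simp add: inner_vec_def matrix_vector_mult_def hessian_glm_loss)
  also have "\<dots> = (\<Sum>k<N. 2 / N * glm_curvature (phi k \<bullet> x) (glm_pi phi \<theta>s k)
      * ((\<Sum>i\<in>UNIV. phi k $ i * z $ i) * (\<Sum>j\<in>UNIV. phi k $ j * z $ j)))"
    by (simp add: sum_distrib_left sum_distrib_right sum.swap[of _ UNIV "{..<N}"] mult_ac)
  finally show ?thesis by (simp add: inner_vec_def power2_eq_square)
qed

lemma mult_one_minus_square_le:
  fixes t :: real
  assumes "0 \<le> t"
  shows "t * (1 - t^2) \<le> 1/2"
proof (cases "t \<le> 1")
  case True
  have "t * (1 - t^2) = (1 + t) / 4 - (t - 1/2)^2 * (t + 1)"
    by (simp add: power2_eq_square algebra_simps)
  also have "\<dots> \<le> (1 + t) / 4"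
    using mult_nonneg_nonneg[OF zero_le_power2[of "t - 1/2"], of "t + 1"] assms by linarith
  finally show ?thesis using True by simp
next
  case False
  then have "1 \<le> t^2" by (simp add: one_le_power)
  then have "t * (1 - t^2) \<le> 0" using assms by (simp add: mult_nonneg_nonpos)
  then show ?thesis by simp
qed

lemma abs_glm_curvature_le:
  assumes "0 < c" "c < 1"
  shows "\<bar>glm_curvature a c\<bar> \<le> 3/16"
proof -
  define q where "q = sigmoid a"
  define t where "t = \<bar>1 - 2 * q\<bar>"
  have q: "0 < q" "q < 1" unfolding q_def using sigmoid_pos sigmoid_less_1 by auto
  have s: "sigmoid' a = (1 - t^2) / 4"
    unfolding sigmoid'_def t_def q_def by (simp add: power2_eq_square algebra_simps)
  have s_bounds: "0 < sigmoid' a" "sigmoid' a \<le> 1/4" by (rule sigmoid'_pos sigmoid'_le)+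
  have "\<bar>sigmoid' a * ((q - c) * (1 - 2 * q))\<bar> = sigmoid' a * \<bar>q - c\<bar> * t"
    using s_bounds unfolding t_def by (simp add: abs_mult)
  also have "\<dots> \<le> sigmoid' a * 1 * t"
    using q assms s_bounds unfolding t_def by (intro mult_right_mono mult_left_mono) auto
  also have "\<dots> = t * (1 - t^2) / 4" unfolding s by simp
  also have "\<dots> \<le> 1/8" using mult_one_minus_square_le[of t] unfolding t_def by simp
  finally have "\<bar>sigmoid' a * ((q - c) * (1 - 2 * q))\<bar> \<le> 1/8" .
  moreover have "\<bar>sigmoid' a * sigmoid' a\<bar> \<le> 1/16"
    using s_bounds mult_mono[of "sigmoid' a" "1/4" "sigmoid' a" "1/4"] by auto
  moreover have "glm_curvature a c = sigmoid' a * sigmoid' a + sigmoid' a * ((q - c) * (1 - 2 * q))"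
    unfolding glm_curvature_def q_def by (simp add: algebra_simps)
  then have "\<bar>glm_curvature a c\<bar> \<le> \<bar>sigmoid' a * sigmoid' a\<bar> + \<bar>sigmoid' a * ((q - c) * (1 - 2 * q))\<bar>"
    by (simp only: abs_triangle_ineq)
  ultimately show ?thesis by linarith
qed

lemma norm_le_max_phi_sq: "k < N \<Longrightarrow> (norm (phi k))^2 \<le> max_phi_sq N phi"
  unfolding max_phi_sq_def by (intro Max_ge) auto

lemma max_phi_sq_nonneg: "N \<ge> 1 \<Longrightarrow> 0 \<le> max_phi_sq N phi"
  using norm_le_max_phi_sq[of 0 N phi] by (meson less_le_trans order.trans zero_le_power2 zero_less_one)

lemma hessian_glm_loss_bound:
  assumes "N \<ge> 1"
  shows "\<bar>z \<bullet> (hessian (glm_loss N phi \<theta>s) x *v z)\<bar> \<le> 3 / 8 * max_phi_sq N phi * (norm z)^2"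
proof -
  let ?M = "max_phi_sq N phi"
  let ?h = "\<lambda>k. glm_curvature (phi k \<bullet> x) (glm_pi phi \<theta>s k)"
  have "\<bar>2 / N * ?h k * (phi k \<bullet> z)^2\<bar> \<le> 2 / N * (3/16) * (?M * (norm z)^2)" if "k < N" for k
  proof -
    have "(phi k \<bullet> z)^2 \<le> (norm (phi k) * norm z)^2"
      using Cauchy_Schwarz_ineq2[of "phi k" z] by (metis abs_ge_zero power2_abs power_mono)
    also have "\<dots> \<le> ?M * (norm z)^2"
      unfolding power_mult_distrib using norm_le_max_phi_sq[OF that] by (intro mult_right_mono) auto
    finally have "(phi k \<bullet> z)^2 \<le> ?M * (norm z)^2" .
    moreover have "\<bar>?h k\<bar> \<le> 3/16"
      using abs_glm_curvature_le sigmoid_pos sigmoid_less_1 unfolding glm_pi_def by blast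
    ultimately have "\<bar>?h k\<bar> * (phi k \<bullet> z)^2 \<le> 3/16 * (?M * (norm z)^2)"
      by (intro mult_mono) auto
    then have "2 / N * (\<bar>?h k\<bar> * (phi k \<bullet> z)^2) \<le> 2 / N * (3/16 * (?M * (norm z)^2))"
      by (rule mult_left_mono) simp
    then show ?thesis by (simp add: abs_mult mult_ac)
  qed
  then have "\<bar>\<Sum>k<N. 2 / N * ?h k * (phi k \<bullet> z)^2\<bar> \<le> (\<Sum>k<N. 2 / N * (3/16) * (?M * (norm z)^2))"
    by (intro order_trans[OF sum_abs] sum_mono) auto
  also have "\<dots> = 3 / 8 * ?M * (norm z)^2" using assms by simp
  finally show ?thesis unfolding hessian_glm_loss_quadratic_form .
qed

lemma linear_coeff_zero_if_quadratic_nonneg: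
  fixes a b :: real
  assumes nonneg: "\<And>t. 0 \<le> t * a + t^2 * b"
  shows "a = 0"
proof (rule ccontr)
  assume "a \<noteq> 0"
  define c where "c = \<bar>b\<bar> + 1"
  define t where "t = - a / (2 * c)"
  have c: "c > 0" "\<bar>b\<bar> \<le> c" unfolding c_def by auto
  have "t * a + t^2 * b \<le> t * a + t^2 * c"
    using c by (intro add_left_mono mult_left_mono) auto
  also have "\<dots> = - (a^2) / (4 * c)"
    unfolding t_def using c by (simp add: field_simps power2_eq_square)
  also have "\<dots> < 0" using \<open>a \<noteq> 0\<close> c by simp
  finally show False using nonneg[of t] by simp
qed

lemma rayleigh_minimizer_eigenvector:
  fixes A :: "real^'n^'n"
  assumes W: "subspace W" and invariant: "\<And>x. x \<in> W \<Longrightarrow> A *v x \<in> W"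
    and symmetric: "\<And>x y. x \<bullet> (A *v y) = y \<bullet> (A *v x)"
    and w: "w \<in> W" "norm w = 1"
    and minimal: "\<And>y. y \<in> W \<Longrightarrow> (w \<bullet> (A *v w)) * (norm y)^2 \<le> y \<bullet> (A *v y)"
  shows "A *v w = (w \<bullet> (A *v w)) *\<^sub>R w"
proof -
  define m where "m = w \<bullet> (A *v w)"
  define y where "y = A *v w - m *\<^sub>R w"
  have "y \<in> W" unfolding y_def using W w invariant by (intro subspace_diff subspace_scale) auto
  have "0 \<le> t * (2 * (y \<bullet> y)) + t^2 * (y \<bullet> (A *v y) - m * (norm y)^2)" for t
  proof -
    have "w + t *\<^sub>R y \<in> W" using W w \<open>y \<in> W\<close> by (intro subspace_add subspace_scale) auto
    then have "0 \<le> (w + t *\<^sub>R y) \<bullet> (A *v (w + t *\<^sub>R y)) - m * (norm (w + t *\<^sub>R y))^2"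
      using minimal unfolding m_def by force
    also have "(w + t *\<^sub>R y) \<bullet> (A *v (w + t *\<^sub>R y))
        = m + t * (w \<bullet> (A *v y)) + t * (y \<bullet> (A *v w)) + t^2 * (y \<bullet> (A *v y))"
      unfolding m_def by (simp add: matrix_vector_right_distrib matrix_vector_mult_scaleR
          inner_add_left inner_add_right power2_eq_square distrib_left)
    also have "w \<bullet> (A *v y) = y \<bullet> (A *v w)" by (rule symmetric)
    also have "(norm (w + t *\<^sub>R y))^2 = 1 + 2 * t * (w \<bullet> y) + t^2 * (norm y)^2"
    proof -
      have "(w + t *\<^sub>R y) \<bullet> (w + t *\<^sub>R y) = w \<bullet> w + 2 * t * (w \<bullet> y) + t^2 * (y \<bullet> y)"
        by (simp add: inner_add_left inner_add_right inner_commute power2_eq_square algebra_simps)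
      then show ?thesis using w by (simp add: dot_square_norm)
    qed
    also have "y \<bullet> (A *v w) = y \<bullet> y + m * (w \<bullet> y)"
      unfolding y_def by (simp add: inner_diff_left inner_diff_right inner_commute algebra_simps)
    finally show ?thesis by (simp add: algebra_simps)
  qed
  then have "2 * (y \<bullet> y) = 0" by (rule linear_coeff_zero_if_quadratic_nonneg)
  then show ?thesis unfolding y_def m_def by simp
qed

lemma quadratic_form_min_on_unit_sphere:
  fixes A :: "real^'n^'n"
  assumes W: "subspace W" and "W \<noteq> {0}"
  obtains w where "w \<in> W" "norm w = 1"
    "\<And>y. y \<in> W \<Longrightarrow> (w \<bullet> (A *v w)) * (norm y)^2 \<le> y \<bullet> (A *v y)"
proof -
  define Q where "Q y = y \<bullet> (A *v y)" for y
  define K where "K = W \<inter> sphere 0 1"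
  have compact: "compact K" unfolding K_def using W by (simp add: closed_Int_compact closed_subspace)
  have nonempty: "K \<noteq> {}"
  proof -
    obtain x where "x \<in> W" "x \<noteq> 0" using assms subspace_0 by blast
    then have "(1 / norm x) *\<^sub>R x \<in> K" unfolding K_def using W by (simp add: subspace_scale)
    then show ?thesis by blast
  qed
  have "continuous_on K Q"
    unfolding Q_def by (intro continuous_intros matrix_vector_mult_linear_continuous_on)
  with continuous_attains_inf[OF compact nonempty] obtain w
    where w: "w \<in> K" "\<And>y. y \<in> K \<Longrightarrow> Q w \<le> Q y" by blast
  have "Q w * (norm y)^2 \<le> Q y" if "y \<in> W" for y
  proof (cases "y = 0")
    case True then show ?thesis by (simp add: Q_def)
  next
    case False
    have "(1 / norm y) *\<^sub>R y \<in> K" unfolding K_def using that False W by (simp add: subspace_scale)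
    then have "Q w \<le> Q ((1 / norm y) *\<^sub>R y)" by (rule w(2))
    also have "\<dots> = (1 / norm y)^2 * Q y"
      unfolding Q_def by (simp add: matrix_vector_mult_scaleR power2_eq_square)
    finally have "Q w \<le> (1 / norm y)^2 * Q y" .
    then show ?thesis using False by (simp add: field_simps power2_eq_square)
  qed
  moreover have "w \<in> W" "norm w = 1" using w(1) unfolding K_def by auto
  ultimately show ?thesis using that unfolding Q_def by blast
qed

lemma finite_eigenvalues_symmetric:
  fixes A :: "real^'n^'n"
  assumes symmetric: "\<And>x y. x \<bullet> (A *v y) = y \<bullet> (A *v x)"
  shows "finite {c. is_eigenvalue A c}"
proof -
  let ?S = "{c. is_eigenvalue A c}"
  define f where "f c = (SOME x. x \<noteq> 0 \<and> A *v x = c *\<^sub>R x)" for c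
  have f: "f c \<noteq> 0 \<and> A *v f c = c *\<^sub>R f c" if "c \<in> ?S" for c
    using that unfolding f_def is_eigenvalue_def mem_Collect_eq by (rule someI_ex)
  have inj: "inj_on f ?S"
  proof (rule inj_onI)
    fix c d assume "c \<in> ?S" "d \<in> ?S" "f c = f d"
    then have "c *\<^sub>R f c = d *\<^sub>R f c" using f[of c] f[of d] by metis
    then show "c = d" using f \<open>c \<in> ?S\<close> by simp
  qed
  have "independent (f ` ?S)"
  proof (rule pairwise_orthogonal_independent)
    show "pairwise orthogonal (f ` ?S)"
      unfolding pairwise_def orthogonal_def
    proof (intro ballI impI)
      fix x y assume "x \<in> f ` ?S" "y \<in> f ` ?S" "x \<noteq> y"
      then obtain c d where cd: "c \<in> ?S" "d \<in> ?S" "x = f c" "y = f d" "c \<noteq> d" by blast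
      have "d * (x \<bullet> y) = x \<bullet> (A *v y)" using f[OF cd(2)] cd by simp
      also have "\<dots> = y \<bullet> (A *v x)" by (rule symmetric)
      also have "\<dots> = c * (x \<bullet> y)" using f[OF cd(1)] cd by (simp add: inner_commute)
      finally show "x \<bullet> y = 0" using \<open>c \<noteq> d\<close> by simp
    qed
    show "0 \<notin> f ` ?S" using f by auto
  qed
  then have "finite (f ` ?S)" by (rule finiteI_independent)
  then show ?thesis using inj by (rule finite_imageD)
qed

lemma design_matrix_mult_vec:
  "design_matrix N phi *v w = (1 / real N) *\<^sub>R (\<Sum>k<N. (phi k \<bullet> w) *\<^sub>R phi k)"
proof -
  have "(design_matrix N phi *v w) $ i = (1 / real N) * (\<Sum>k<N. (\<Sum>j\<in>UNIV. phi k $ j * w $ j) * phi k $ i)"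
    for i
  proof -
    have "(design_matrix N phi *v w) $ i = (\<Sum>j\<in>UNIV. (1 / real N) * (\<Sum>k<N. phi k $ i * phi k $ j) * w $ j)"
      by (simp add: matrix_vector_mult_def design_matrix_def outer_def)
    then show ?thesis
      by (simp only: sum_distrib_left sum_distrib_right, subst sum.swap) (simp add: mult_ac)
  qed
  then show ?thesis by (simp add: vec_eq_iff inner_vec_def)
qed

lemma inner_design_matrix:
  "y \<bullet> (design_matrix N phi *v w) = (1 / real N) * (\<Sum>k<N. (phi k \<bullet> y) * (phi k \<bullet> w))"
  unfolding design_matrix_mult_vec by (simp add: inner_sum_right inner_commute mult.commute)

lemma design_matrix_mult_vec_in_span: "design_matrix N phi *v w \<in> span (phi ` {..<N})"
  unfolding design_matrix_mult_vec by (intro span_mul span_sum span_base) auto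

lemma design_matrix_min_eigenvalue:
  assumes "\<exists>i<N. phi i \<noteq> 0"
  obtains m where "m > 0" "is_eigenvalue (design_matrix N phi) m"
    "\<And>w. w \<in> span (phi ` {..<N}) \<Longrightarrow> m * (norm w)^2 \<le> (1 / real N) * (\<Sum>k<N. (phi k \<bullet> w)^2)"
proof -
  let ?A = "design_matrix N phi" and ?W = "span (phi ` {..<N})"
  have symmetric: "x \<bullet> (?A *v y) = y \<bullet> (?A *v x)" for x y
    by (simp add: inner_design_matrix mult.commute)
  have quadratic: "y \<bullet> (?A *v y) = (1 / real N) * (\<Sum>k<N. (phi k \<bullet> y)^2)" for y
    by (simp add: inner_design_matrix power2_eq_square)
  have "?W \<noteq> {0}" using assms span_base[of _ "phi ` {..<N}"] by blast
  then obtain w where w: "w \<in> ?W" "norm w = 1"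
    and minimal: "\<And>y. y \<in> ?W \<Longrightarrow> (w \<bullet> (?A *v w)) * (norm y)^2 \<le> y \<bullet> (?A *v y)"
    using quadratic_form_min_on_unit_sphere subspace_span by blast
  define m where "m = w \<bullet> (?A *v w)"
  have eigen: "?A *v w = m *\<^sub>R w"
    unfolding m_def using subspace_span design_matrix_mult_vec_in_span symmetric w minimal
    by (rule rayleigh_minimizer_eigenvector)
  have "m > 0"
  proof (rule ccontr)
    assume "\<not> m > 0"
    moreover have "m \<ge> 0" unfolding m_def quadratic by (simp add: sum_nonneg)
    moreover have "N > 0" using assms by auto
    ultimately have "(\<Sum>k<N. (phi k \<bullet> w)^2) = 0" unfolding m_def quadratic by simp
    then have "orthogonal w x" if "x \<in> phi ` {..<N}" for x
      using that by (auto simp: sum_nonneg_eq_0_iff orthogonal_def inner_commute)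
    then have "orthogonal w w" using orthogonal_to_span w(1) by blast
    then show False using w(2) by (simp add: orthogonal_def)
  qed
  moreover have "is_eigenvalue ?A m"
    unfolding is_eigenvalue_def using eigen w(2) by (intro exI[of _ w]) auto
  moreover have "m * (norm y)^2 \<le> (1 / real N) * (\<Sum>k<N. (phi k \<bullet> y)^2)" if "y \<in> ?W" for y
    using minimal[OF that] unfolding m_def quadratic .
  ultimately show ?thesis using that by blast
qed

lemma
  assumes "\<exists>i<N. phi i \<noteq> 0"
  shows lambda_phi_pos: "lambda_phi N phi > 0"
    and lambda_phi_le_quadratic: "w \<in> span (phi ` {..<N}) \<Longrightarrow>
      lambda_phi N phi * (norm w)^2 \<le> (1 / real N) * (\<Sum>k<N. (phi k \<bullet> w)^2)"
proof -
  let ?S = "{c. c > 0 \<and> is_eigenvalue (design_matrix N phi) c}"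
  obtain m where m: "m \<in> ?S"
    and bound: "\<And>w. w \<in> span (phi ` {..<N}) \<Longrightarrow> m * (norm w)^2 \<le> (1 / real N) * (\<Sum>k<N. (phi k \<bullet> w)^2)"
    using design_matrix_min_eigenvalue[OF assms] by blast
  have finite_S: "finite ?S"
    by (rule finite_subset[OF _ finite_eigenvalues_symmetric]) (auto simp: inner_design_matrix mult.commute)
  moreover have "?S \<noteq> {}" using m by blast
  ultimately have "lambda_phi N phi \<in> ?S" unfolding lambda_phi_def by (rule Min_in)
  moreover have "lambda_phi N phi \<le> m" unfolding lambda_phi_def using finite_S m by (rule Min_le)
  ultimately show "lambda_phi N phi > 0"
    and "w \<in> span (phi ` {..<N}) \<Longrightarrow> lambda_phi N phi * (norm w)^2 \<le> (1 / real N) * (\<Sum>k<N. (phi k \<bullet> w)^2)"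
    using bound[of w] mult_right_mono[of "lambda_phi N phi" m "(norm w)^2"] by auto
qed

lemma sigmoid_diff_sq_le: "4 * (sigmoid b - sigmoid a)^2 \<le> (sigmoid b - sigmoid a) * (b - a)"
proof -
  obtain c where c: "sigmoid b - sigmoid a = c * (b - a)" "min (sigmoid' a) (sigmoid' b) \<le> c" "c \<le> 1/4"
    using sigmoid_mean_value by blast
  have "0 \<le> c" using c(2) sigmoid'_pos[of a] sigmoid'_pos[of b] by linarith
  have "4 * (sigmoid b - sigmoid a)^2 = (4 * c) * (c * (b - a)^2)"
    unfolding c(1) by (simp add: power2_eq_square algebra_simps)
  also have "\<dots> \<le> 1 * (c * (b - a)^2)" using c(3) \<open>0 \<le> c\<close> by (intro mult_right_mono) auto
  also have "\<dots> = (sigmoid b - sigmoid a) * (b - a)" unfolding c(1) by (simp add: power2_eq_square)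
  finally show ?thesis .
qed

lemma sigmoid_diff_sq_ge:
  assumes "0 \<le> m" "m \<le> sigmoid' a" "m \<le> sigmoid' b"
  shows "m^2 * (b - a)^2 \<le> (sigmoid b - sigmoid a)^2"
proof -
  obtain c where c: "sigmoid b - sigmoid a = c * (b - a)" "min (sigmoid' a) (sigmoid' b) \<le> c"
    using sigmoid_mean_value by blast
  have "m^2 \<le> c^2" using c(2) assms by (intro power_mono) auto
  then show ?thesis unfolding c(1) by (simp add: power_mult_distrib mult_right_mono)
qed

lemma glm_u_eq_Min_image: "glm_u N phi \<theta> = Min ((\<lambda>k. sigmoid' (phi k \<bullet> \<theta>)) ` {..<N})"
  unfolding glm_u_def glm_pi_def sigmoid'_def by (rule arg_cong[where f = Min]) auto

lemma glm_u_le: "k < N \<Longrightarrow> glm_u N phi \<theta> \<le> sigmoid' (phi k \<bullet> \<theta>)"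
  unfolding glm_u_eq_Min_image by (rule Min_le) auto

lemma glm_u_pos:
  assumes "N \<ge> 1"
  shows "0 < glm_u N phi \<theta>"
proof -
  have "glm_u N phi \<theta> \<in> (\<lambda>k. sigmoid' (phi k \<bullet> \<theta>)) ` {..<N}"
    unfolding glm_u_eq_Min_image using assms by (intro Min_in) (auto simp: lessThan_empty_iff)
  then show ?thesis using sigmoid'_pos by auto
qed

context
  fixes N :: nat and phi :: "nat \<Rightarrow> real^'d" and \<theta>s \<theta> w :: "real^'d"
  assumes projection: "\<And>k. k < N \<Longrightarrow> phi k \<bullet> w = phi k \<bullet> \<theta> - phi k \<bullet> \<theta>s"
begin

lemma glm_loss_le_inner_grad:
  "8 * glm_u N phi \<theta> * glm_loss N phi \<theta>s \<theta> \<le> grad (glm_loss N phi \<theta>s) \<theta> \<bullet> w"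
proof -
  define r where "r k = sigmoid (phi k \<bullet> \<theta>) - sigmoid (phi k \<bullet> \<theta>s)" for k
  let ?u = "glm_u N phi \<theta>"
  have "2 / N * ?u * (4 * (r k)^2) \<le> 2 / N * r k * sigmoid' (phi k \<bullet> \<theta>) * (phi k \<bullet> w)" if "k < N" for k
  proof -
    have u: "0 < ?u" "?u \<le> sigmoid' (phi k \<bullet> \<theta>)"
      using that by (auto intro: glm_u_pos glm_u_le)
    have "4 * (r k)^2 \<le> r k * (phi k \<bullet> w)"
      unfolding r_def projection[OF that]
      by (rule sigmoid_diff_sq_le)
    then have "?u * (4 * (r k)^2) \<le> sigmoid' (phi k \<bullet> \<theta>) * (r k * (phi k \<bullet> w))"
      using u by (intro mult_mono[OF u(2)]) auto
    then show ?thesis by (simp add: divide_right_mono mult_ac)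
  qed
  then have "(\<Sum>k<N. 2 / N * ?u * (4 * (r k)^2)) \<le> (\<Sum>k<N. 2 / N * r k * sigmoid' (phi k \<bullet> \<theta>) * (phi k \<bullet> w))"
    by (intro sum_mono) auto
  then show ?thesis
    unfolding inner_grad_glm_loss glm_loss_def r_def glm_pi_def
    by (simp add: sum_distrib_left mult_ac)
qed

lemma min_glm_u_sq_le_glm_loss:
  "(min (glm_u N phi \<theta>) (glm_u N phi \<theta>s))^2 * ((1 / real N) * (\<Sum>k<N. (phi k \<bullet> w)^2))
     \<le> glm_loss N phi \<theta>s \<theta>"
proof -
  let ?m = "min (glm_u N phi \<theta>) (glm_u N phi \<theta>s)"
  have "?m^2 * (phi k \<bullet> w)^2 \<le> (glm_pi phi \<theta> k - glm_pi phi \<theta>s k)^2" if "k < N" for k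
    unfolding glm_pi_def projection[OF that]
    using that glm_u_pos[of N phi \<theta>] glm_u_pos[of N phi \<theta>s]
      glm_u_le[OF that, of phi \<theta>] glm_u_le[OF that, of phi \<theta>s]
    by (intro sigmoid_diff_sq_ge) auto
  then have "(1 / real N) * (\<Sum>k<N. ?m^2 * (phi k \<bullet> w)^2)
      \<le> (1 / real N) * (\<Sum>k<N. (glm_pi phi \<theta> k - glm_pi phi \<theta>s k)^2)"
    by (intro mult_left_mono sum_mono) auto
  then show ?thesis
    unfolding glm_loss_def by (simp add: sum_distrib_left mult.left_commute)
qed

end

lemma glm_grad_norm_sq_lower_bound:
  fixes phi :: "nat \<Rightarrow> real^'d" and \<theta> \<theta>s :: "real^'d"
  assumes "\<exists>i<N. phi i \<noteq> 0"
  defines "u \<equiv> glm_u N phi \<theta>" and "m \<equiv> min (glm_u N phi \<theta>) (glm_u N phi \<theta>s)"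
    and "L \<equiv> glm_loss N phi \<theta>s"
  shows "64 * u^2 * m^2 * lambda_phi N phi * L \<theta> \<le> (norm (grad L \<theta>))^2"
proof -
  let ?lam = "lambda_phi N phi" and ?g = "norm (grad L \<theta>)"
  obtain w z where w: "w \<in> span (phi ` {..<N})" and z: "\<And>x. x \<in> span (phi ` {..<N}) \<Longrightarrow> orthogonal z x"
    and decomp: "\<theta> - \<theta>s = w + z"
    using orthogonal_subspace_decomp_exists by metis
  have projection: "phi k \<bullet> w = phi k \<bullet> \<theta> - phi k \<bullet> \<theta>s" if "k < N" for k
  proof -
    have "phi k \<bullet> z = 0" using z[of "phi k"] that by (simp add: span_base orthogonal_def inner_commute)
    then show ?thesis using arg_cong[OF decomp, of "(\<bullet>) (phi k)"] by (simp add: inner_diff_right inner_add_right)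
  qed
  have "N \<ge> 1" using assms(1) by auto
  then have nonneg: "0 \<le> 8 * u * L \<theta>"
    unfolding u_def L_def using glm_u_pos[of N phi \<theta>] glm_loss_nonneg[of N phi \<theta>s \<theta>] by simp
  have "8 * u * L \<theta> \<le> grad L \<theta> \<bullet> w"
    unfolding u_def L_def using projection by (rule glm_loss_le_inner_grad)
  also have "\<dots> \<le> ?g * norm w" by (rule order_trans[OF abs_ge_self Cauchy_Schwarz_ineq2])
  finally have "(8 * u * L \<theta>)^2 \<le> (?g * norm w)^2" using nonneg by (rule power_mono)
  then have "(8 * u * L \<theta>)^2 * (m^2 * ?lam) \<le> (?g * norm w)^2 * (m^2 * ?lam)"
    using lambda_phi_pos[OF assms(1)] by (intro mult_right_mono) auto
  then have "64 * u^2 * m^2 * ?lam * L \<theta> * L \<theta> \<le> ?g^2 * (m^2 * (?lam * (norm w)^2))"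
    by (simp add: power_mult_distrib power2_eq_square mult_ac)
  also have "\<dots> \<le> ?g^2 * (m^2 * ((1 / real N) * (\<Sum>k<N. (phi k \<bullet> w)^2)))"
    using lambda_phi_le_quadratic[OF assms(1) w] by (intro mult_left_mono) auto
  also have "\<dots> \<le> ?g^2 * L \<theta>"
    unfolding m_def L_def using projection by (intro mult_left_mono min_glm_u_sq_le_glm_loss) auto
  finally show ?thesis
    using glm_loss_nonneg[of N phi \<theta>s \<theta>] unfolding L_def
    by (cases "glm_loss N phi \<theta>s \<theta> = 0") auto
qed

lemma glm_uniform_smoothness_le_local:
  fixes phi :: "nat \<Rightarrow> real^'d" and \<theta> \<theta>s :: "real^'d"
  assumes "\<exists>i<N. phi i \<noteq> 0" and "glm_loss N phi \<theta>s \<theta> > 0"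
  defines "M \<equiv> max_phi_sq N phi" and "u \<equiv> glm_u N phi \<theta>" and "v \<equiv> glm_u N phi \<theta>s"
    and "lam \<equiv> lambda_phi N phi" and "g \<equiv> norm (grad (glm_loss N phi \<theta>s) \<theta>)"
  shows "3/8 * M \<le> M / (32 * (min u v * sqrt lam) powr (3/2)) * g
    + 17 * M / (512 * u^2 * min (u^2) (v^2) * lam) * g^2 / glm_loss N phi \<theta>s \<theta>"
proof -
  let ?L = "glm_loss N phi \<theta>s \<theta>" and ?D = "u^2 * (min u v)^2 * lam"
  have "N \<ge> 1" using assms(1) by auto
  then have M: "0 \<le> M" and pos: "0 < u" "0 < v" "0 < lam"
    unfolding M_def u_def v_def lam_def using max_phi_sq_nonneg glm_u_pos lambda_phi_pos[OF assms(1)] by auto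
  then have "min (u^2) (v^2) = (min u v)^2" by (auto simp: min_def power_mono_iff)
  then have L0: "17 * M / (512 * u^2 * min (u^2) (v^2) * lam) = 17 * M / 512 / ?D" by simp
  have "64 * ?D * ?L \<le> g^2"
    using glm_grad_norm_sq_lower_bound[OF assms(1), of \<theta> \<theta>s]
    unfolding u_def v_def lam_def g_def by (simp add: mult_ac)
  then have ratio: "64 \<le> g^2 / ?L / ?D" using pos assms(2) by (simp add: field_simps)
  have "3/8 * M \<le> 17 * M / 512 * 64" using M by simp
  also have "\<dots> \<le> 17 * M / 512 * (g^2 / ?L / ?D)" using M ratio by (intro mult_left_mono) auto
  also have "\<dots> = 17 * M / (512 * u^2 * min (u^2) (v^2) * lam) * g^2 / ?L" unfolding L0 by simp
  finally show ?thesis using M unfolding g_def by (simp add: add_increasing)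
qed

theorem lemma10:
  fixes N :: nat and phi :: "nat \<Rightarrow> real^'d" and \<theta>s :: "real^'d"
  defines "L \<equiv> glm_loss N phi \<theta>s"
      and "\<beta> \<equiv> 3 / 8 * max_phi_sq N phi"
      and "v \<equiv> Min {glm_pi phi \<theta>s i * (1 - glm_pi phi \<theta>s i) | i. i < N}"
      and "lam \<equiv> lambda_phi N phi"
  assumes "N \<ge> 1"
      and "\<exists>i<N. phi i \<noteq> 0"
  shows "(\<forall>\<theta> z. \<bar>z \<bullet> (hessian L \<theta> *v z)\<bar> \<le> \<beta> * (norm z)^2)
       \<and> (\<forall>\<theta> z. L \<theta> > 0 \<longrightarrow>
            (let u = glm_u N phi \<theta>;
                 L1 = max_phi_sq N phi / (32 * (min u v * sqrt lam) powr (3/2));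
                 L0 = 17 * max_phi_sq N phi / (512 * u^2 * min (u^2) (v^2) * lam);
                 g = norm (grad L \<theta>)
             in \<bar>z \<bullet> (hessian L \<theta> *v z)\<bar> \<le> (L1 * g + L0 * g^2 / L \<theta>) * (norm z)^2))"
proof -
  let ?M = "max_phi_sq N phi"
  have smooth: "\<bar>z \<bullet> (hessian L \<theta> *v z)\<bar> \<le> 3/8 * ?M * (norm z)^2" for \<theta> z
    unfolding L_def using assms(5) by (rule hessian_glm_loss_bound)
  have v: "v = glm_u N phi \<theta>s" unfolding v_def glm_u_def ..
  show ?thesis unfolding \<beta>_def Let_def
  proof (intro conjI allI impI)
    fix \<theta> z
    show "\<bar>z \<bullet> (hessian L \<theta> *v z)\<bar> \<le> 3/8 * ?M * (norm z)^2" by (rule smooth)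
    assume "L \<theta> > 0"
    then have "3/8 * ?M \<le> ?M / (32 * (min (glm_u N phi \<theta>) v * sqrt lam) powr (3/2)) * norm (grad L \<theta>)
        + 17 * ?M / (512 * (glm_u N phi \<theta>)^2 * min ((glm_u N phi \<theta>)^2) (v^2) * lam)
          * (norm (grad L \<theta>))^2 / L \<theta>"
      unfolding v L_def lam_def by (rule glm_uniform_smoothness_le_local[OF assms(6)])
    then show "\<bar>z \<bullet> (hessian L \<theta> *v z)\<bar> \<le> (?M / (32 * (min (glm_u N phi \<theta>) v * sqrt lam) powr (3/2))
        * norm (grad L \<theta>) + 17 * ?M / (512 * (glm_u N phi \<theta>)^2 * min ((glm_u N phi \<theta>)^2) (v^2) * lam)
          * (norm (grad L \<theta>))^2 / L \<theta>) * (norm z)^2"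
      using order_trans[OF smooth mult_right_mono] by simp
  qed
qed

end
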